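(* Let $a_1,a_2,\dots$ be positive integers. For all $n\ge 2$, $Q_n(x)=p_n(x,x+1)$.
   Context: Fix positive integers $a_1,a_2,\dots$. Define polynomials $Q_n(x)\in\mathbb{Z}[x]$ by $Q_0(x)=1$, $Q_1(x)=x+a_1$, and $Q_n(x)=(-1)^{n+1}a_nQ_{n-1}(x)+x(x+1)Q_{n-2}(x)$ for $n\ge 2$. Equivalently, $Q_n(x)$ is the determinant of the $n\times n$ tridiagonal matrix $M_n=(m_{ij})$ defined by: - $m_{11}=x+a_1$ and $m_{kk}=(-1)^{k+1}a_k$ for $k\ge 2$; - $m_{i,i+1}=-(x+1)$ for odd $i$ and $m_{i,i+1}=-x$ for even $i$; - $m_{i,i-1}=x$ for even $i$ and $m_{i,i-1}=x+1$ for odd $i\ge3$; - all other entries $0$. For $n\ge1$, $1\le l\le n$, let $I_{n,l}$ be the set of strictly increasing sequences $(t_1,\dots,t_l)$ in $\{1,\dots,n\}$ with $t_i\equiv n+i-l\pmod 2$ for all $i$. Let $a_{\mathbf t}=a_{t_1}\cdots a_{t_l}$ and $\gamma_n(l)=\sum_{\mathbf t\in I_{n,l}}a_{\mathbf t}$, with $\gamma_n(0)=1$. For $n\ge2$ write $n=2m+r_0$ with $r_0\in\{0,1\}$ and $r_1=1-r_0$, and define $$p_n(x,y)=x^{r_0}\sum_{k=0}^{m}(-1)^{m-k}x^ky^k\gamma_n(n-2k-r_0)+x^{r_1}\sum_{k=0}^{m-r_1}(-1)^{m-k}x^ky^k\gamma_n(n-2k-r_1).$$ *)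

theory Defs
  imports "HOL-Computational_Algebra.Polynomial" "HOL-Number_Theory.Cong"
begin

text \<open>The sequence a is indexed from 1 (a 0 is unused).
  Q a n is the polynomial Q_n(x) in Z[x].\<close>
fun Q :: "(nat \<Rightarrow> int) \<Rightarrow> nat \<Rightarrow> int poly" where
  "Q a 0 = 1"
| "Q a (Suc 0) = [:a 1, 1:]"
| "Q a (Suc (Suc k)) =
     smult ((-1) ^ (k + 3) * a (k + 2)) (Q a (Suc k)) + [:0, 1:] * [:1, 1:] * Q a k"

text \<open>I_{n,l}: strictly increasing sequences (t_1,...,t_l) in {1..n} with
  t_i = n + i - l (mod 2); represented as lists, list index j = i - 1.\<close>
definition I_set :: "nat \<Rightarrow> nat \<Rightarrow> nat list set" where
  "I_set n l = {ts. length ts = l \<and> sorted_wrt (<) ts \<and> set ts \<subseteq> {1..n} \<and>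
      (\<forall>j<l. [int (ts ! j) = int n + int (j + 1) - int l] (mod 2))}"

definition gamma :: "(nat \<Rightarrow> int) \<Rightarrow> nat \<Rightarrow> nat \<Rightarrow> int" where
  "gamma a n l = (if l = 0 then 1 else (\<Sum>ts\<in>I_set n l. \<Prod>t\<leftarrow>ts. a t))"

definition p :: "(nat \<Rightarrow> int) \<Rightarrow> nat \<Rightarrow> 'r::comm_ring_1 \<Rightarrow> 'r \<Rightarrow> 'r" where
  "p a n x y =
    (let m = n div 2; r0 = n mod 2; r1 = 1 - r0 in
      x ^ r0 * (\<Sum>k=0..m. (-1) ^ (m - k) * x ^ k * y ^ k * of_int (gamma a n (n - 2 * k - r0)))
    + x ^ r1 * (\<Sum>k=0..m - r1. (-1) ^ (m - k) * x ^ k * y ^ k * of_int (gamma a n (n - 2 * k - r1))))"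

end

theory Submission
  imports Defs
begin

text \<open>Collecting the terms of Q_n by the number l of factors a_t they contain gives
  Q_n = sum over l of (+-) x^ceil((n-l)/2) (x+1)^floor((n-l)/2) gamma_n(l). This follows by
  induction from the three-term recursion of Q_n, since
  gamma_n(l) = a_n gamma_(n-1)(l-1) + gamma_(n-2)(l): an admissible sequence either ends in n
  or lies in {1..n-2}, because its last entry has the parity of n. The polynomial p_n(x,x+1)
  is the same sum with the terms of even and of odd l grouped separately.\<close>

lemma I_set_parity:
  "I_set n l = {ts. length ts = l \<and> sorted_wrt (<) ts \<and> set ts \<subseteq> {1..n} \<and>
      (\<forall>j<l. even (ts ! j + n + (j + 1) + l))}"
proof -
  have "[int t = int n + int (j + 1) - int l] (mod 2) \<longleftrightarrow> even (t + n + (j + 1) + l)" for t j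
    unfolding cong_def by presburger
  then show ?thesis
    unfolding I_set_def by simp
qed

lemma finite_I_set: "finite (I_set n l)"
proof (rule finite_subset)
  show "I_set n l \<subseteq> {ts. set ts \<subseteq> {1..n} \<and> length ts = l}"
    by (auto simp: I_set_parity)
  show "finite {ts. set ts \<subseteq> {1..n} \<and> length ts = l}"
    by (rule finite_lists_length_eq) simp
qed

lemma length_le_if_sorted_wrt_less:
  assumes "sorted_wrt (<) ts" and "set ts \<subseteq> {1..n}"
  shows "length ts \<le> n"
proof -
  have "length ts = card (set ts)"
    using assms(1) by (simp add: strict_sorted_iff distinct_card)
  also have "\<dots> \<le> card {1..n}"
    using assms(2) by (intro card_mono) auto
  finally show ?thesis by simp
qed

lemma I_set_eq_empty: "n < l \<Longrightarrow> I_set n l = {}"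
  using length_le_if_sorted_wrt_less by (fastforce simp: I_set_parity)

lemma I_set_1_1: "I_set 1 1 = {[1]}"
proof -
  have "ts = [1]" if "ts \<in> I_set 1 1" for ts
    using that by (cases ts) (auto simp: I_set_parity)
  moreover have "[1] \<in> I_set 1 1"
    by (auto simp: I_set_parity)
  ultimately show ?thesis by blast
qed

lemma I_set_subset_Suc_Suc: "I_set n l \<subseteq> I_set (Suc (Suc n)) l"
  by (auto simp: I_set_parity)

lemma snoc_mem_I_set_Suc_Suc:
  assumes "xs \<in> I_set (Suc n) k"
  shows "xs @ [Suc (Suc n)] \<in> I_set (Suc (Suc n)) (Suc k)"
proof -
  from assms have len: "length xs = k" and "sorted_wrt (<) xs" "set xs \<subseteq> {1..Suc n}"
    and par: "\<forall>j<k. even (xs ! j + Suc n + (j + 1) + k)"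
    by (auto simp: I_set_parity)
  moreover have "even ((xs @ [Suc (Suc n)]) ! j + Suc (Suc n) + (j + 1) + Suc k)" if "j < Suc k" for j
    using that par len by (auto simp: nth_append less_Suc_eq)
  ultimately show ?thesis
    by (auto simp: I_set_parity sorted_wrt_append)
qed

lemma mem_I_set_Suc_SucE:
  assumes "ts \<in> I_set (Suc (Suc n)) (Suc k)"
  obtains xs where "xs \<in> I_set (Suc n) k" "ts = xs @ [Suc (Suc n)]"
    | "ts \<in> I_set n (Suc k)"
proof -
  from assms have "ts \<noteq> []"
    by (auto simp: I_set_parity)
  then obtain xs t where ts: "ts = xs @ [t]"
    by (metis rev_exhaust)
  from assms have len: "length xs = k" and srt: "sorted_wrt (<) xs" and lt: "\<forall>x\<in>set xs. x < t"
    and range: "set xs \<subseteq> {1..Suc (Suc n)}" "t \<in> {1..Suc (Suc n)}"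
    and par: "\<forall>j<Suc k. even ((xs @ [t]) ! j + Suc (Suc n) + (j + 1) + Suc k)"
    by (auto simp: I_set_parity ts sorted_wrt_append)
  have "even (t + n)"
    using par[rule_format, of k] len by (auto simp: nth_append)
  show thesis
  proof (cases "t = Suc (Suc n)")
    case True
    have "even (xs ! j + Suc n + (j + 1) + k)" if "j < k" for j
      using par[rule_format, of j] that len by (simp add: nth_append)
    then have "xs \<in> I_set (Suc n) k"
      using len srt lt range True by (auto simp: I_set_parity less_Suc_eq_le)
    then show thesis
      using that(1) True ts by blast
  next
    case False
    with range \<open>even (t + n)\<close> have "t \<le> n"
      by auto presburger+
    then have "ts \<in> I_set n (Suc k)"
      unfolding I_set_parity ts using len srt lt range par
      by (auto simp: sorted_wrt_append; fastforce)
    then show thesis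
      using that(2) by blast
  qed
qed

lemma I_set_Suc_Suc:
  "I_set (Suc (Suc n)) (Suc k) = (\<lambda>xs. xs @ [Suc (Suc n)]) ` I_set (Suc n) k \<union> I_set n (Suc k)"
  using I_set_subset_Suc_Suc by (auto elim!: mem_I_set_Suc_SucE intro: snoc_mem_I_set_Suc_Suc)

lemma gamma_eq_sum: "gamma a n l = (\<Sum>ts\<in>I_set n l. \<Prod>t\<leftarrow>ts. a t)"
proof -
  have "I_set n 0 = {[]}"
    by (auto simp: I_set_parity)
  then show ?thesis
    by (simp add: gamma_def)
qed

lemma gamma_eq_0: "n < l \<Longrightarrow> gamma a n l = 0"
  by (simp add: gamma_eq_sum I_set_eq_empty)

lemma gamma_Suc_Suc:
  "gamma a (Suc (Suc n)) (Suc k) = a (Suc (Suc n)) * gamma a (Suc n) k + gamma a n (Suc k)"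
proof -
  let ?snoc = "\<lambda>xs. xs @ [Suc (Suc n)]"
  have disjoint: "?snoc ` I_set (Suc n) k \<inter> I_set n (Suc k) = {}"
    by (auto simp: I_set_parity)
  have "gamma a (Suc (Suc n)) (Suc k) =
      (\<Sum>ts\<in>?snoc ` I_set (Suc n) k. \<Prod>t\<leftarrow>ts. a t) + gamma a n (Suc k)"
    unfolding gamma_eq_sum I_set_Suc_Suc
    by (rule sum.union_disjoint) (auto simp: finite_I_set disjoint)
  also have "(\<Sum>ts\<in>?snoc ` I_set (Suc n) k. \<Prod>t\<leftarrow>ts. a t)
      = (\<Sum>xs\<in>I_set (Suc n) k. (\<Prod>t\<leftarrow>xs. a t) * a (Suc (Suc n)))"
    by (subst sum.reindex) (auto simp: inj_on_def)
  finally show ?thesis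
    by (simp add: gamma_eq_sum sum_distrib_left mult.commute)
qed

definition expansion_sign :: "nat \<Rightarrow> nat \<Rightarrow> int" where
  "expansion_sign n l = (-1) ^ (l div 2 + (if odd l \<and> even n then 1 else 0))"

lemma expansion_sign_Suc_Suc: "expansion_sign (Suc (Suc n)) l = expansion_sign n l"
  by (simp add: expansion_sign_def)

lemma expansion_sign_Suc_Suc_Suc:
  "expansion_sign (Suc (Suc n)) (Suc k) = (-1) ^ (n + 3) * expansion_sign (Suc n) k"
  by (cases "even k"; cases "even n") (auto simp: expansion_sign_def power_add elim!: evenE oddE)

definition Q_expansion :: "(nat \<Rightarrow> int) \<Rightarrow> nat \<Rightarrow> 'r::comm_ring_1 \<Rightarrow> 'r \<Rightarrow> 'r" where
  "Q_expansion a n x y =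
    (\<Sum>l\<le>n. of_int (expansion_sign n l * gamma a n l) * x ^ ((n - l + 1) div 2) * y ^ ((n - l) div 2))"

lemma Q_expansion_Suc_Suc:
  "Q_expansion a (Suc (Suc n)) x y =
     of_int ((-1) ^ (n + 3) * a (n + 2)) * Q_expansion a (Suc n) x y + x * y * Q_expansion a n x y"
proof -
  define U where "U l = of_int (expansion_sign (Suc (Suc n)) l * gamma a n l)
      * x ^ ((Suc (Suc n) - l + 1) div 2) * y ^ ((Suc (Suc n) - l) div 2)" for l
  let ?c = "of_int ((-1) ^ (n + 3) * a (n + 2))"
  let ?T = "\<lambda>m l. of_int (expansion_sign m l * gamma a m l) * x ^ ((m - l + 1) div 2) * y ^ ((m - l) div 2)"
  have term_Suc: "?T (Suc (Suc n)) (Suc k) = ?c * ?T (Suc n) k + U (Suc k)" for k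
    unfolding U_def gamma_Suc_Suc expansion_sign_Suc_Suc_Suc by (simp add: algebra_simps)
  have U_le: "U l = x * y * ?T n l" if "l \<le> n" for l
  proof -
    have "Suc (Suc n) - l + 1 = Suc (Suc (n - l + 1))" "Suc (Suc n) - l = Suc (Suc (n - l))"
      using that by simp_all
    then show ?thesis
      unfolding U_def expansion_sign_Suc_Suc by (simp add: algebra_simps)
  qed
  have "Q_expansion a (Suc (Suc n)) x y = U 0 + (\<Sum>k\<le>Suc n. ?T (Suc (Suc n)) (Suc k))"
    unfolding Q_expansion_def
    by (subst sum.atMost_Suc_shift) (simp add: U_def expansion_sign_Suc_Suc gamma_def)
  also have "\<dots> = ?c * Q_expansion a (Suc n) x y + (U 0 + (\<Sum>k\<le>Suc n. U (Suc k)))"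
    unfolding term_Suc sum.distrib Q_expansion_def sum_distrib_left by (simp add: ac_simps)
  also have "U 0 + (\<Sum>k\<le>Suc n. U (Suc k)) = (\<Sum>l\<le>Suc (Suc n). U l)"
    by (subst sum.atMost_Suc_shift) simp
  also have "\<dots> = (\<Sum>l\<le>n. U l)"
    by (simp add: U_def gamma_eq_0)
  also have "\<dots> = x * y * Q_expansion a n x y"
    unfolding Q_expansion_def sum_distrib_left by (simp add: U_le)
  finally show ?thesis .
qed

lemma Q_eq_Q_expansion: "Q a n = Q_expansion a n [:0, 1:] [:1, 1:]"
proof (induction a n rule: Q.induct)
  case (1 a)
  then show ?case
    by (simp add: Q_expansion_def expansion_sign_def gamma_def)
next
  case (2 a)
  have "gamma a 1 1 = a 1"
    unfolding gamma_def I_set_1_1 by simp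
  then show ?case
    by (simp add: Q_expansion_def expansion_sign_def gamma_def of_int_poly)
next
  case (3 a k)
  then show ?case
    by (simp add: Q_expansion_Suc_Suc of_int_poly)
qed

lemma sum_lessThan_double:
  fixes f :: "nat \<Rightarrow> 'a::comm_monoid_add"
  shows "(\<Sum>l<2 * N. f l) = (\<Sum>j<N. f (2 * j)) + (\<Sum>j<N. f (2 * j + 1))"
  by (induction N) (simp_all add: algebra_simps)

lemma p_even_eq_Q_expansion:
  fixes x y :: "'r::comm_ring_1"
  assumes "m \<ge> 1"
  shows "p a (2 * m) x y = Q_expansion a (2 * m) x y"
proof -
  let ?T = "\<lambda>l. of_int (expansion_sign (2 * m) l * gamma a (2 * m) l)
      * x ^ ((2 * m - l + 1) div 2) * y ^ ((2 * m - l) div 2)"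
  have even_terms: "(\<Sum>k=0..m. (-1) ^ (m - k) * x ^ k * y ^ k * of_int (gamma a (2 * m) (2 * m - 2 * k)))
      = (\<Sum>j\<le>m. ?T (2 * j))"
  proof (subst sum.atLeastAtMost_rev, unfold atLeast0AtMost, rule sum.cong)
    fix j assume "j \<in> {..m}"
    then obtain d where "m = j + d"
      using le_Suc_ex by auto
    then show "(-1) ^ (m - (m + 0 - j)) * x ^ (m + 0 - j) * y ^ (m + 0 - j)
        * of_int (gamma a (2 * m) (2 * m - 2 * (m + 0 - j))) = ?T (2 * j)"
      by (simp add: expansion_sign_def)
  qed simp
  have odd_terms: "x * (\<Sum>k=0..m - 1. (-1) ^ (m - k) * x ^ k * y ^ k
        * of_int (gamma a (2 * m) (2 * m - 2 * k - 1))) = (\<Sum>j<m. ?T (2 * j + 1))"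
  proof (subst sum.atLeastAtMost_rev, unfold atLeast0AtMost sum_distrib_left, rule sum.cong)
    show "{..m - 1} = {..<m}"
      using assms by auto
  next
    fix j assume "j \<in> {..<m}"
    then obtain d where "m = j + d + 1"
      using less_imp_Suc_add by fastforce
    then show "x * ((-1) ^ (m - (m - 1 + 0 - j)) * x ^ (m - 1 + 0 - j) * y ^ (m - 1 + 0 - j)
        * of_int (gamma a (2 * m) (2 * m - 2 * (m - 1 + 0 - j) - 1))) = ?T (2 * j + 1)"
      by (simp add: expansion_sign_def algebra_simps)
  qed
  have "Q_expansion a (2 * m) x y = (\<Sum>l<2 * m. ?T l) + ?T (2 * m)"
    unfolding Q_expansion_def by (simp add: lessThan_Suc_atMost[symmetric])
  also have "\<dots> = (\<Sum>j\<le>m. ?T (2 * j)) + (\<Sum>j<m. ?T (2 * j + 1))"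
    unfolding sum_lessThan_double by (simp add: lessThan_Suc_atMost[symmetric])
  finally show ?thesis
    using even_terms odd_terms by (simp add: p_def Let_def)
qed

lemma p_odd_eq_Q_expansion:
  fixes x y :: "'r::comm_ring_1"
  shows "p a (2 * m + 1) x y = Q_expansion a (2 * m + 1) x y"
proof -
  let ?T = "\<lambda>l. of_int (expansion_sign (2 * m + 1) l * gamma a (2 * m + 1) l)
      * x ^ ((2 * m + 1 - l + 1) div 2) * y ^ ((2 * m + 1 - l) div 2)"
  have even_terms: "x * (\<Sum>k=0..m. (-1) ^ (m - k) * x ^ k * y ^ k
        * of_int (gamma a (2 * m + 1) (2 * m + 1 - 2 * k - 1))) = (\<Sum>j\<le>m. ?T (2 * j))"
  proof (subst sum.atLeastAtMost_rev, unfold atLeast0AtMost sum_distrib_left, rule sum.cong)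
    fix j assume "j \<in> {..m}"
    then obtain d where "m = j + d"
      using le_Suc_ex by auto
    then show "x * ((-1) ^ (m - (m + 0 - j)) * x ^ (m + 0 - j) * y ^ (m + 0 - j)
        * of_int (gamma a (2 * m + 1) (2 * m + 1 - 2 * (m + 0 - j) - 1))) = ?T (2 * j)"
      by (simp add: expansion_sign_def algebra_simps)
  qed simp
  have odd_terms: "(\<Sum>k=0..m. (-1) ^ (m - k) * x ^ k * y ^ k
        * of_int (gamma a (2 * m + 1) (2 * m + 1 - 2 * k))) = (\<Sum>j\<le>m. ?T (2 * j + 1))"
  proof (subst sum.atLeastAtMost_rev, unfold atLeast0AtMost, rule sum.cong)
    fix j assume "j \<in> {..m}"
    then obtain d where "m = j + d"
      using le_Suc_ex by auto
    then show "(-1) ^ (m - (m + 0 - j)) * x ^ (m + 0 - j) * y ^ (m + 0 - j)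
        * of_int (gamma a (2 * m + 1) (2 * m + 1 - 2 * (m + 0 - j))) = ?T (2 * j + 1)"
      by (simp add: expansion_sign_def algebra_simps)
  qed simp
  have "Q_expansion a (2 * m + 1) x y = (\<Sum>l<2 * (m + 1). ?T l)"
    unfolding Q_expansion_def by (simp add: lessThan_Suc_atMost[symmetric])
  also have "\<dots> = (\<Sum>j\<le>m. ?T (2 * j)) + (\<Sum>j\<le>m. ?T (2 * j + 1))"
    unfolding sum_lessThan_double by (simp add: lessThan_Suc_atMost)
  finally show ?thesis
    using even_terms odd_terms by (simp add: p_def Let_def)
qed

lemma p_eq_Q_expansion:
  fixes x y :: "'r::comm_ring_1"
  assumes "n \<ge> 1"
  shows "p a n x y = Q_expansion a n x y"
proof (cases "even n")
  case True
  then obtain m where "n = 2 * m"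
    by (elim evenE)
  with assms p_even_eq_Q_expansion[of m] show ?thesis
    by simp
next
  case False
  then obtain m where "n = 2 * m + 1"
    by (elim oddE)
  then show ?thesis
    using p_odd_eq_Q_expansion[of a m] by simp
qed

theorem corollary1:
  fixes a :: "nat \<Rightarrow> int" and n :: nat
  assumes "\<forall>k\<ge>1. a k > 0"
    and "n \<ge> 2"
  shows "Q a n = p a n [:0, 1:] [:1, 1:]"
  \<comment> \<open>The identity holds for arbitrary integers a_k.\<close>
  using assms(2) by (simp add: Q_eq_Q_expansion p_eq_Q_expansion)

end
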